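(* Let $L_n:=|C(X_1^n)|$. As $t\to\infty$, \[\frac32(2t+1)-\mathbb E[L_{2t+1}]\ge\Bigl(\frac{1}{18\sqrt\pi}+o(1)\Bigr)t^{-1/2},\qquad \frac32(2t)-\mathbb E[L_{2t}]\ge\Bigl(\frac{1}{9\sqrt\pi}+o(1)\Bigr)t^{-1/2}.\] In particular, for every fixed $0<c<\frac{\sqrt2}{18\sqrt\pi}$ there exists $n_0(c)\in\mathbb N$ such that $\mathbb E[|C(X_1^n)|]\le\frac32n-\frac{c}{\sqrt n}$ for all $n\ge n_0(c)$.
   Context: Let $\mathcal X=\{A,B,C,D\}$ and let $(X_i)_{i\ge1}$ be the first-order Markov chain on $\mathcal X$ with $\mathbb P(X_1=x)=1/4$ for all $x$ and transitions: from $A$ to $A$ or $C$ w.p. $1/2$ each; from $B$ to $B$ or $D$ w.p. $1/2$ each; from $C$ and from $D$ to each of $A,B,C,D$ w.p. $1/4$. A nonempty string is admissible if all consecutive transitions have positive probability; $\mathcal A$ is the set of admissible nonempty strings; $K(u):=-\log_2\mathbb P(X_1^m=u)$ for $u=x_1^m\in\mathcal A$. Shortlex source code $C:\mathcal A\to\{0,1\}^+$: order nonempty binary strings by length then lexicographically as $b_1,b_2,\dots$; order $\mathcal A$ as $u_1,u_2,\dots$ by increasing $K$, then increasing length, then lexicographically with $A<B<C<D$; set $C(u_j):=b_j$ (the code $C$ is distinct from the symbol $C$). $|w|$ is the length of a binary string $w$. *)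

theory Defs
  imports Complex_Main
begin

datatype sym = SA | SB | SC | SD

fun trans :: "sym \<Rightarrow> sym \<Rightarrow> real" where
  "trans SA y = (if y = SA \<or> y = SC then 1/2 else 0)"
| "trans SB y = (if y = SB \<or> y = SD then 1/2 else 0)"
| "trans SC y = 1/4"
| "trans SD y = 1/4"

fun tprod :: "sym list \<Rightarrow> real" where
  "tprod (x # y # xs) = trans x y * tprod (y # xs)"
| "tprod _ = 1"

text \<open>P(X_1^m = u), with uniform initial distribution.\<close>
definition Pstr :: "sym list \<Rightarrow> real" where
  "Pstr u = (if u = [] then 0 else (1/4) * tprod u)"

definition admissible :: "sym list \<Rightarrow> bool" where
  "admissible u \<longleftrightarrow> u \<noteq> [] \<and> (\<forall>i. Suc i < length u \<longrightarrow> trans (u ! i) (u ! Suc i) > 0)"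

definition K :: "sym list \<Rightarrow> real" where
  "K u = - log 2 (Pstr u)"

fun sym_idx :: "sym \<Rightarrow> nat" where
  "sym_idx SA = 0" | "sym_idx SB = 1" | "sym_idx SC = 2" | "sym_idx SD = 3"

definition code_prec :: "sym list \<Rightarrow> sym list \<Rightarrow> bool" where
  "code_prec v u \<longleftrightarrow> K v < K u \<or> (K v = K u \<and> (length v < length u \<or>
     (length v = length u \<and> (map sym_idx v, map sym_idx u) \<in> lexord {(a, b). a < b})))"

text \<open>Number of admissible strings before u (u = u_j iff rank u = j - 1).\<close>
definition rank :: "sym list \<Rightarrow> nat" where
  "rank u = card {v. admissible v \<and> code_prec v u}"

definition bin_prec :: "bool list \<Rightarrow> bool list \<Rightarrow> bool" where
  "bin_prec w' w \<longleftrightarrow> length w' < length w \<or>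
     (length w' = length w \<and> (map of_bool w' :: nat list, map of_bool w) \<in> lexord {(a, b). a < b})"

text \<open>The shortlex source code: C(u_j) = b_j.\<close>
definition code :: "sym list \<Rightarrow> bool list" where
  "code u = (THE w. w \<noteq> [] \<and> card {w'. w' \<noteq> [] \<and> bin_prec w' w} = rank u)"

definition EL :: "nat \<Rightarrow> real" where
  "EL n = (\<Sum>u\<in>{u. length u = n \<and> admissible u}. Pstr u * real (length (code u)))"

end

theory Submission
  imports Defs "HOL-Library.List_Lexorder" "HOL-Analysis.Gamma_Function"
begin

(* For an admissible string u, K u is the integer info u: two bits for the first symbol, then
   one bit per transition out of A or B and two bits per transition out of C or D. The shortlex
   codeword of the string of rank r has length floor (log2 (r + 2)), so |C u| <= K u, with
   |C u| <= K u - 1 as long as fewer than 2 ^ K u - 2 strings precede u. Counting the strings of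
   smaller information shows that in the class of strings of length n and information k a
   probability mass of at least savings n k = max 0 (min (info_prob n k) (spare n k)) receives
   such a shortened codeword; hence E L_n <= E K(X_1^n) - (sum over k of savings n k), where
   E K(X_1^n) = 3n/2 + 1/2. Both info_prob and spare satisfy
   f (n + 1) k = (f n (k - 1) + f n (k - 2)) / 2, which determines spare near the diagonal
   k = 3n/2: the savings are at least 1/2 + X_t/2 for n = 2t and 1/2 + X_t/4 for n = 2t + 1,
   where X_t = spare (2t) (3t) obeys X_(t+1) = b_t/4 - X_t/8 with b_t = (2t choose t) / 4^t.
   Thus X_t ~ 2 b_t / 9, and b_t ~ 1 / sqrt (pi t) by Wallis' product. *)

section \<open>Information content of admissible strings\<close>

fun weight :: "sym \<Rightarrow> nat" where
  "weight SA = 1" | "weight SB = 1" | "weight SC = 2" | "weight SD = 2"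

fun info :: "sym list \<Rightarrow> nat" where
  "info [] = 0"
| "info [x] = 2"
| "info (x # y # r) = weight x + info (y # r)"

lemma UNIV_sym: "(UNIV :: sym set) = {SA, SB, SC, SD}"
  using sym.exhaust by auto

lemma trans_pos_eq: "trans x y > 0 \<Longrightarrow> trans x y = (1/2) ^ weight x"
  by (cases x; cases y; simp add: power2_eq_square)

lemma admissible_singleton [simp]: "admissible [x]"
  by (simp add: admissible_def)

lemma admissible_nonempty: "admissible u \<Longrightarrow> u \<noteq> []"
  by (simp add: admissible_def)

lemma admissible_Cons_Cons:
  "admissible (x # y # r) \<longleftrightarrow> trans x y > 0 \<and> admissible (y # r)"
  unfolding admissible_def by (auto simp: less_Suc_eq_0_disj)

lemma Pstr_eq_info: "admissible u \<Longrightarrow> Pstr u = (1/2) ^ info u"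
proof (induction u rule: info.induct)
  case (3 x y r)
  then have "trans x y = (1/2) ^ weight x" "Pstr (y # r) = (1/2) ^ info (y # r)"
    by (simp_all add: admissible_Cons_Cons trans_pos_eq)
  then show ?case by (simp add: Pstr_def power_add)
qed (auto simp: admissible_def Pstr_def power2_eq_square)

lemma K_eq_info: "admissible u \<Longrightarrow> K u = real (info u)"
  by (simp add: K_def Pstr_eq_info power_one_over log_divide)

lemma info_bounds: "u \<noteq> [] \<Longrightarrow> length u < info u \<and> info u \<le> 2 * length u"
proof (induction u rule: info.induct)
  case (3 x y r) then show ?case by (cases x) auto
qed auto

section \<open>Counting admissible strings by information\<close>

definition info_level :: "(nat \<Rightarrow> bool) \<Rightarrow> nat \<Rightarrow> sym list set" where
  "info_level P k = {u. admissible u \<and> P (length u) \<and> info u = k}"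

lemma finite_info_below: "finite {u. admissible u \<and> info u < k}"
proof (rule finite_subset)
  show "{u. admissible u \<and> info u < k} \<subseteq> {xs. set xs \<subseteq> UNIV \<and> length xs \<le> k}"
    by (auto dest!: admissible_nonempty info_bounds)
  show "finite {xs. set xs \<subseteq> (UNIV :: sym set) \<and> length xs \<le> k}"
    by (rule finite_lists_length_le) (simp add: UNIV_sym)
qed

lemma finite_info_level [simp]: "finite (info_level P k)"
  by (rule finite_subset[OF _ finite_info_below[of "Suc k"]]) (auto simp: info_level_def)

lemma info_level_empty: "k < 2 \<Longrightarrow> info_level P k = {}"
  by (auto simp: info_level_def dest!: admissible_nonempty info_bounds)

lemma info_level_2: "info_level P 2 = (if P 1 then {[SA], [SB], [SC], [SD]} else {})"
proof -
  have "u \<in> info_level P 2 \<longleftrightarrow> P 1 \<and> u \<in> {[SA], [SB], [SC], [SD]}" for u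
  proof
    assume u: "u \<in> info_level P 2"
    then have "length u = 1"
      using info_bounds[of u] admissible_nonempty[of u] by (auto simp: info_level_def)
    then obtain x where "u = [x]" by (auto simp: length_Suc_conv)
    then show "P 1 \<and> u \<in> {[SA], [SB], [SC], [SD]}" using u by (cases x) (auto simp: info_level_def)
  qed (auto simp: info_level_def)
  then show ?thesis by auto
qed

lemma info_level_first_symbol:
  assumes "k \<ge> 3"
  shows "info_level P k =
      Cons SA ` {r \<in> info_level (\<lambda>l. P (Suc l)) (k - 1). hd r \<in> {SA, SC}}
    \<union> Cons SB ` {r \<in> info_level (\<lambda>l. P (Suc l)) (k - 1). hd r \<in> {SB, SD}}
    \<union> Cons SC ` info_level (\<lambda>l. P (Suc l)) (k - 2)
    \<union> Cons SD ` info_level (\<lambda>l. P (Suc l)) (k - 2)"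
    (is "?L = ?R")
proof
  show "?L \<subseteq> ?R"
  proof
    fix u assume u: "u \<in> ?L"
    then obtain x y r where u_eq: "u = x # y # r"
      using assms by (cases u rule: info.cases) (auto simp: info_level_def)
    with u have "trans x y > 0" "y # r \<in> info_level (\<lambda>l. P (Suc l)) (k - weight x)"
      by (auto simp: info_level_def admissible_Cons_Cons)
    then show "u \<in> ?R" unfolding u_eq by (cases x; cases y) auto
  qed
next
  show "?R \<subseteq> ?L"
  proof
    fix u assume "u \<in> ?R"
    then obtain x r where u_eq: "u = x # r" and r: "r \<in> info_level (\<lambda>l. P (Suc l)) (k - weight x)"
      and "x = SA \<longrightarrow> hd r \<in> {SA, SC}" and "x = SB \<longrightarrow> hd r \<in> {SB, SD}"
      by auto
    moreover obtain y r' where "r = y # r'"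
      using r admissible_nonempty by (cases r) (auto simp: info_level_def)
    ultimately show "u \<in> ?L"
      using assms by (cases x; cases y) (auto simp: info_level_def admissible_Cons_Cons)
  qed
qed

lemma card_info_level_rec:
  assumes "k \<ge> 3"
  shows "card (info_level P k) =
    card (info_level (\<lambda>l. P (Suc l)) (k - 1)) + 2 * card (info_level (\<lambda>l. P (Suc l)) (k - 2))"
proof -
  let ?Q = "\<lambda>l. P (Suc l)"
  let ?A = "{r \<in> info_level ?Q (k - 1). hd r \<in> {SA, SC}}"
  let ?B = "{r \<in> info_level ?Q (k - 1). hd r \<in> {SB, SD}}"
  let ?C = "info_level ?Q (k - 2)"
  have "info_level ?Q (k - 1) = ?A \<union> ?B"
    by (auto intro: sym.exhaust)
  moreover have "card (?A \<union> ?B) = card ?A + card ?B"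
    by (rule card_Un_disjoint) auto
  ultimately have AB: "card ?A + card ?B = card (info_level ?Q (k - 1))"
    by simp
  let ?SA = "Cons SA ` ?A" and ?SB = "Cons SB ` ?B" and ?SC = "Cons SC ` ?C" and ?SD = "Cons SD ` ?C"
  have "card (info_level P k) = card (?SA \<union> ?SB \<union> ?SC) + card ?SD"
    unfolding info_level_first_symbol[OF assms] by (rule card_Un_disjoint) auto
  also have "\<dots> = card (?SA \<union> ?SB) + card ?SC + card ?SD"
    by (subst card_Un_disjoint) auto
  also have "\<dots> = card ?SA + card ?SB + card ?SC + card ?SD"
    by (subst card_Un_disjoint) auto
  also have "\<dots> = card ?A + card ?B + 2 * card ?C"
    by (simp add: card_image)
  finally show ?thesis using AB by simp
qed

abbreviation level_len :: "nat \<Rightarrow> nat \<Rightarrow> sym list set" where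
  "level_len n k \<equiv> info_level (\<lambda>l. l = n) k"

abbreviation level_shorter :: "nat \<Rightarrow> nat \<Rightarrow> sym list set" where
  "level_shorter n k \<equiv> info_level (\<lambda>l. l < n) k"

abbreviation level :: "nat \<Rightarrow> sym list set" where
  "level k \<equiv> info_level (\<lambda>_. True) k"

lemma card_level_rec: "k \<ge> 3 \<Longrightarrow> card (level k) = card (level (k - 1)) + 2 * card (level (k - 2))"
  using card_info_level_rec[of k "\<lambda>_. True"] by simp

lemma card_level_2: "card (level 2) = 4"
  by (simp add: info_level_2)

lemma card_level_3: "card (level 3) = 4"
  using card_level_rec[of 3] card_level_2 info_level_empty[of 1] by simp

lemma card_level_4: "card (level 4) = 12"
  using card_level_rec[of 4] card_level_3 card_level_2 by simp

lemma card_level_Suc_add: "k \<ge> 2 \<Longrightarrow> card (level (Suc k)) + card (level k) = 2 ^ Suc k"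
proof (induction k rule: nat_induct_at_least)
  case (Suc k)
  then show ?case using card_level_rec[of "Suc (Suc k)"] by simp
qed (simp add: card_level_2 card_level_3)

definition num_info_below :: "nat \<Rightarrow> nat" where
  "num_info_below k = card {u. admissible u \<and> info u < k}"

lemma num_info_below_Suc: "num_info_below (Suc k) = num_info_below k + card (level k)"
proof -
  have "{u. admissible u \<and> info u < Suc k} = {u. admissible u \<and> info u < k} \<union> level k"
    by (auto simp: info_level_def)
  moreover have "card ({u. admissible u \<and> info u < k} \<union> level k) = num_info_below k + card (level k)"
    unfolding num_info_below_def
    by (rule card_Un_disjoint) (simp_all add: finite_info_below, auto simp: info_level_def)
  ultimately show ?thesis
    by (simp add: num_info_below_def)
qed

lemma num_info_below_eq: "k \<ge> 2 \<Longrightarrow> 2 * num_info_below k + card (level k) + 4 = 2 ^ Suc k"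
proof (induction k rule: nat_induct_at_least)
  case base
  have "num_info_below 2 = 0"
    using num_info_below_Suc[of 0] num_info_below_Suc[of 1] info_level_empty[of 0] info_level_empty[of 1]
    by (simp add: num_info_below_def numeral_2_eq_2)
  then show ?case by (simp add: card_level_2)
next
  case (Suc k)
  then show ?case using num_info_below_Suc[of k] card_level_Suc_add[of k] by simp
qed

section \<open>Lengths of shortlex codewords\<close>

lemma bij_betw_card_less_key:
  fixes key :: "'a \<Rightarrow> 'b::linorder"
  assumes "finite C" and "inj_on key C"
  shows "bij_betw (\<lambda>u. card {v\<in>C. key v < key u}) C {..<card C}"
proof -
  let ?pos = "\<lambda>u. card {v\<in>C. key v < key u}"
  have pos_less: "?pos u < ?pos w" if "u \<in> C" "key u < key w" for u w
    using that assms(1) by (intro psubset_card_mono) (auto dest: less_trans)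
  have inj: "inj_on ?pos C"
  proof (rule inj_onI)
    fix u w assume u: "u \<in> C" and w: "w \<in> C" and eq: "?pos u = ?pos w"
    show "u = w"
    proof (rule ccontr)
      assume "u \<noteq> w"
      then have "key u \<noteq> key w"
        using assms(2) u w by (auto dest: inj_onD)
      then have "key u < key w \<or> key w < key u"
        by (simp add: neq_iff)
      then show False
        using pos_less[OF u, of w] pos_less[OF w, of u] eq by linarith
    qed
  qed
  moreover have "?pos ` C \<subseteq> {..<card C}"
    using assms(1) by (auto intro!: psubset_card_mono)
  moreover have "card (?pos ` C) = card {..<card C}"
    using card_image[OF inj] by simp
  ultimately show ?thesis
    using card_subset_eq[of "{..<card C}" "?pos ` C"] by (simp add: bij_betw_def)
qed

lemma card_filter_less_bij_betw:
  assumes "bij_betw f C {..<card C}"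
  shows "card {u\<in>C. f u < M} = min M (card C)"
proof -
  have "inj_on f {u\<in>C. f u < M}"
    using assms by (auto simp: bij_betw_def intro: inj_on_subset)
  moreover have "f ` {u\<in>C. f u < M} = {..<min M (card C)}"
  proof -
    have "f ` {u\<in>C. f u < M} = f ` C \<inter> {..<M}"
      by auto
    then show ?thesis
      using assms by (auto simp: bij_betw_def)
  qed
  ultimately show ?thesis
    by (metis card_image card_lessThan)
qed

definition shortlex_key :: "bool list \<Rightarrow> nat list" where
  "shortlex_key w = length w # map of_bool w"

lemma bin_prec_iff_shortlex_key: "bin_prec w' w \<longleftrightarrow> shortlex_key w' < shortlex_key w"
  by (auto simp: bin_prec_def shortlex_key_def list_less_def)

lemma inj_shortlex_key: "inj shortlex_key"
  by (rule injI) (auto simp: shortlex_key_def inj_map_eq_map inj_def)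

lemma finite_nonempty_words: "finite {w :: bool list. w \<noteq> [] \<and> length w \<le> L}"
  by (rule finite_subset[OF _ finite_lists_length_le[of "UNIV :: bool set" L]]) auto

lemma card_nonempty_words: "card {w :: bool list. w \<noteq> [] \<and> length w \<le> L} + 2 = 2 ^ Suc L"
proof (induction L)
  case (Suc L)
  let ?W = "{w :: bool list. w \<noteq> [] \<and> length w \<le> L}" and ?V = "{w :: bool list. length w = Suc L}"
  have "finite ?W"
    by (rule finite_nonempty_words)
  moreover have "finite ?V" and "card ?V = 2 ^ Suc L"
    using finite_lists_length_eq[of "UNIV :: bool set" "Suc L"]
      card_lists_length_eq[of "UNIV :: bool set" "Suc L"] by simp_all
  ultimately have "card (?W \<union> ?V) = card ?W + 2 ^ Suc L"
    by (simp add: card_Un_disjoint disjoint_iff)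
  moreover have "{w :: bool list. w \<noteq> [] \<and> length w \<le> Suc L} = ?W \<union> ?V"
    by auto
  ultimately show ?case
    using Suc.IH by simp
qed simp

lemma bin_predecessors_eq:
  assumes "length w \<le> L"
  shows "{w'. w' \<noteq> [] \<and> bin_prec w' w} =
    {w'\<in>{w. w \<noteq> [] \<and> length w \<le> L}. shortlex_key w' < shortlex_key w}"
  using assms by (auto simp: bin_prec_iff_shortlex_key shortlex_key_def)

lemma ex1_word_num_predecessors: "\<exists>!w. w \<noteq> [] \<and> card {w'. w' \<noteq> [] \<and> bin_prec w' w} = r"
proof -
  let ?W = "\<lambda>L. {w :: bool list. w \<noteq> [] \<and> length w \<le> L}"
  let ?pos = "\<lambda>L w. card {w'\<in>?W L. shortlex_key w' < shortlex_key w}"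
  have bij: "bij_betw (?pos L) (?W L) {..<card (?W L)}" for L
    by (rule bij_betw_card_less_key[OF finite_nonempty_words inj_on_subset[OF inj_shortlex_key]]) simp
  have "Suc (Suc r) < 2 ^ Suc (Suc r)"
    by (rule less_exp)
  then have "r \<in> {..<card (?W (Suc r))}"
    using card_nonempty_words[of "Suc r"] by simp
  then have "r \<in> ?pos (Suc r) ` ?W (Suc r)"
    by (simp only: bij_betw_imp_surj_on[OF bij])
  then obtain w where "r = ?pos (Suc r) w" and w: "w \<in> ?W (Suc r)"
    by (rule imageE)
  then have ex: "w \<noteq> [] \<and> card {w'. w' \<noteq> [] \<and> bin_prec w' w} = r"
    by (simp add: bin_predecessors_eq[of w "Suc r"])
  have "w' = w" if w': "w' \<noteq> [] \<and> card {v. v \<noteq> [] \<and> bin_prec v w'} = r" for w'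
  proof -
    let ?L = "max (length w) (length w')"
    have mem: "w \<in> ?W ?L" "w' \<in> ?W ?L" and eq: "?pos ?L w' = ?pos ?L w"
      using ex w' bin_predecessors_eq[of w ?L] bin_predecessors_eq[of w' ?L] by auto
    show ?thesis
      by (rule inj_onD[OF bij_betw_imp_inj_on[OF bij] eq mem(2) mem(1)])
  qed
  with ex show ?thesis by blast
qed

lemma two_pow_length_le_num_predecessors:
  "2 ^ length w \<le> card {w'. w' \<noteq> [] \<and> bin_prec w' w} + 2"
proof (cases "w = []")
  case False
  have "{w' :: bool list. w' \<noteq> [] \<and> length w' \<le> length w - 1} \<subseteq> {w'. w' \<noteq> [] \<and> bin_prec w' w}"
    using False by (auto simp: bin_prec_def neq_Nil_conv)
  moreover have "finite {w'. w' \<noteq> [] \<and> bin_prec w' w}"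
    by (rule finite_subset[OF _ finite_nonempty_words[of "length w"]]) (auto simp: bin_prec_def)
  ultimately have "card {w' :: bool list. w' \<noteq> [] \<and> length w' \<le> length w - 1}
      \<le> card {w'. w' \<noteq> [] \<and> bin_prec w' w}"
    by (rule card_mono[rotated])
  then show ?thesis
    using card_nonempty_words[of "length w - 1"] False by simp
qed simp

lemma two_pow_length_code_le: "2 ^ length (code u) \<le> Defs.rank u + 2"
proof -
  have "code u \<noteq> [] \<and> card {w'. w' \<noteq> [] \<and> bin_prec w' (code u)} = Defs.rank u"
    unfolding code_def by (rule theI') (rule ex1_word_num_predecessors)
  then show ?thesis
    using two_pow_length_le_num_predecessors[of "code u"] by simp
qed

definition code_key :: "sym list \<Rightarrow> nat list" where
  "code_key u = info u # length u # map sym_idx u"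

lemma code_prec_iff_code_key:
  "admissible v \<Longrightarrow> admissible u \<Longrightarrow> code_prec v u \<longleftrightarrow> code_key v < code_key u"
  by (auto simp: code_prec_def code_key_def list_less_def K_eq_info)

lemma inj_code_key: "inj code_key"
proof -
  have "inj sym_idx"
    by (rule injI) (case_tac x; case_tac y; simp)
  then show ?thesis
    by (intro injI) (auto simp: code_key_def inj_map_eq_map)
qed

lemma rank_eq_card_less_code_key:
  assumes "admissible u"
  shows "Defs.rank u = card {v. admissible v \<and> code_key v < code_key u}"
proof -
  have "{v. admissible v \<and> code_prec v u} = {v. admissible v \<and> code_key v < code_key u}"
    using code_prec_iff_code_key[OF _ assms] by blast
  then show ?thesis
    by (simp add: Defs.rank_def)
qed

lemma rank_le:
  assumes "u \<in> level_len n k"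
  shows "Defs.rank u \<le> num_info_below k + card (level_shorter n k)
    + card {v \<in> level_len n k. code_key v < code_key u}"
proof -
  have u: "admissible u"
    using assms by (simp add: info_level_def)
  have "{v. admissible v \<and> code_key v < code_key u} \<subseteq>
      {v. admissible v \<and> info v < k} \<union> level_shorter n k
        \<union> {v \<in> level_len n k. code_key v < code_key u}"
    using assms by (auto simp: info_level_def code_key_def)
  then have "Defs.rank u \<le> card ({v. admissible v \<and> info v < k} \<union> level_shorter n k
      \<union> {v \<in> level_len n k. code_key v < code_key u})"
    unfolding rank_eq_card_less_code_key[OF u] by (rule card_mono[rotated]) (simp add: finite_info_below)
  also have "\<dots> \<le> num_info_below k + card (level_shorter n k)
      + card {v \<in> level_len n k. code_key v < code_key u}"
    unfolding num_info_below_def by (rule order_trans[OF card_Un_le add_right_mono[OF card_Un_le]])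
  finally show ?thesis .
qed

lemma rank_less: "admissible u \<Longrightarrow> Defs.rank u < num_info_below (Suc (info u))"
proof -
  assume u: "admissible u"
  have "{v. admissible v \<and> code_key v < code_key u} \<subseteq> {v. admissible v \<and> info v < Suc (info u)} - {u}"
    by (auto simp: code_key_def)
  then have "Defs.rank u \<le> card ({v. admissible v \<and> info v < Suc (info u)} - {u})"
    unfolding rank_eq_card_less_code_key[OF u] by (rule card_mono[rotated]) (simp add: finite_info_below)
  also have "\<dots> < num_info_below (Suc (info u))"
    unfolding num_info_below_def using u by (intro card_Diff1_less finite_info_below) simp
  finally show ?thesis .
qed

lemma length_code_le_info:
  assumes "admissible u"
  shows "length (code u) \<le> info u"
proof -
  have "2 \<le> info u"
    using info_bounds[OF admissible_nonempty[OF assms]] admissible_nonempty[OF assms] by simp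
  then have "Defs.rank u + 2 < 2 ^ Suc (info u)"
    using rank_less[OF assms] num_info_below_eq[of "Suc (info u)"] by simp
  then have "(2::nat) ^ length (code u) < 2 ^ Suc (info u)"
    using two_pow_length_code_le[of u] by linarith
  then have "length (code u) < Suc (info u)"
    by (rule power_less_imp_less_exp[rotated]) simp
  then show ?thesis by simp
qed

lemma length_code_less_info:
  assumes "Defs.rank u + 2 < 2 ^ info u"
  shows "length (code u) < info u"
proof -
  have "(2::nat) ^ length (code u) < 2 ^ info u"
    using assms two_pow_length_code_le[of u] by linarith
  then show ?thesis
    by (rule power_less_imp_less_exp[rotated]) simp
qed

section \<open>Savings in each class of strings\<close>

definition info_prob :: "nat \<Rightarrow> nat \<Rightarrow> real" where
  "info_prob n k = card (level_len n k) / 2 ^ k"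

(* 2 ^ k * spare n k counts the nonempty binary words of length < k that are taken neither by
   the strings of information < k nor by those of information k and length < n
   (two_pow_mult_spare_eq); written this way it obeys the same recursion in n as info_prob. *)
definition spare :: "nat \<Rightarrow> nat \<Rightarrow> real" where
  "spare n k = card (level k) / 2 ^ Suc k - card (level_shorter n k) / 2 ^ k"

definition savings :: "nat \<Rightarrow> nat \<Rightarrow> real" where
  "savings n k = max 0 (min (info_prob n k) (spare n k))"

lemma two_pow_mult_spare_eq:
  assumes "k \<ge> 2"
  shows "2 ^ k * spare n k = 2 ^ k - 2 - real (num_info_below k) - real (card (level_shorter n k))"
proof -
  have "real (card (level k)) = 2 * 2 ^ k - 4 - 2 * real (num_info_below k)"
    using arg_cong[OF num_info_below_eq[OF assms], of real] by simp
  then show ?thesis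
    by (simp add: spare_def field_simps)
qed

lemma card_short_codes_ge:
  assumes "k \<ge> 2"
  shows "2 ^ k * savings n k \<le> card {u \<in> level_len n k. Defs.rank u + 2 < 2 ^ k}"
proof -
  let ?C = "level_len n k"
  let ?pos = "\<lambda>u. card {v\<in>?C. code_key v < code_key u}"
  define M where "M = nat \<lceil>2 ^ k * spare n k\<rceil>"
  have sub: "{u \<in> ?C. ?pos u < M} \<subseteq> {u \<in> ?C. Defs.rank u + 2 < 2 ^ k}"
  proof clarify
    fix u assume u: "u \<in> ?C" and "?pos u < M"
    then have "real (?pos u) < 2 ^ k * spare n k"
      using less_ceiling_iff[of "int (?pos u)" "2 ^ k * spare n k"] by (simp add: M_def zless_nat_eq_int_zless)
    then have "real (Defs.rank u + 2) < real (2 ^ k)"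
      using rank_le[OF u] two_pow_mult_spare_eq[OF assms, of n] by simp
    then show "Defs.rank u + 2 < 2 ^ k"
      by (simp only: of_nat_less_iff)
  qed
  have "card {u \<in> ?C. ?pos u < M} = min M (card ?C)"
    by (rule card_filter_less_bij_betw[OF bij_betw_card_less_key[OF finite_info_level
          inj_on_subset[OF inj_code_key subset_UNIV]]])
  moreover have "card {u \<in> ?C. ?pos u < M} \<le> card {u \<in> ?C. Defs.rank u + 2 < 2 ^ k}"
    by (rule card_mono[OF _ sub]) simp
  moreover have "2 ^ k * savings n k = max 0 (min (real (card ?C)) (2 ^ k * spare n k))"
    by (simp add: savings_def info_prob_def max_mult_distrib_left min_mult_distrib_left)
  moreover have "2 ^ k * spare n k \<le> M"
    unfolding M_def by (rule of_nat_ceiling)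
  ultimately show ?thesis
    by linarith
qed

lemma sum_Pstr_code_length_le:
  "(\<Sum>u\<in>level_len n k. Pstr u * length (code u)) \<le> real k * info_prob n k - savings n k"
proof (cases "k \<ge> 2")
  case True
  let ?C = "level_len n k"
  let ?short = "\<lambda>u. Defs.rank u + 2 < 2 ^ k"
  have "Pstr u * length (code u) \<le> (1/2) ^ k * (real k - of_bool (?short u))" if "u \<in> ?C" for u
  proof -
    have "real (length (code u)) \<le> real k - of_bool (?short u)"
      using length_code_le_info[of u] length_code_less_info[of u] that by (auto simp: info_level_def)
    then show ?thesis
      using that by (simp add: Pstr_eq_info info_level_def)
  qed
  then have "(\<Sum>u\<in>?C. Pstr u * length (code u)) \<le> (\<Sum>u\<in>?C. (1/2) ^ k * (real k - of_bool (?short u)))"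
    by (rule sum_mono)
  also have "\<dots> = (1/2) ^ k * (real k * card ?C - card {u \<in> ?C. ?short u})"
    by (simp add: sum_distrib_left[symmetric] sum_subtractf Int_def)
  also have "\<dots> \<le> (1/2) ^ k * (real k * card ?C - 2 ^ k * savings n k)"
    using card_short_codes_ge[OF True, of n] by (intro mult_left_mono) auto
  also have "\<dots> = real k * info_prob n k - savings n k"
    by (simp add: info_prob_def field_simps)
  finally show ?thesis .
qed (simp add: info_level_empty info_prob_def savings_def)

lemma EL_le_sum_savings: "EL n \<le> (\<Sum>k\<le>2 * n. real k * info_prob n k - savings n k)"
proof -
  have "{u. length u = n \<and> admissible u} = (\<Union>k\<le>2 * n. level_len n k)"
    by (auto simp: info_level_def dest: info_bounds[OF admissible_nonempty])
  then have "EL n = (\<Sum>u\<in>(\<Union>k\<le>2 * n. level_len n k). Pstr u * length (code u))"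
    by (simp add: EL_def)
  also have "\<dots> = (\<Sum>k\<le>2 * n. \<Sum>u\<in>level_len n k. Pstr u * length (code u))"
    by (rule sum.UNION_disjoint) (simp, simp, auto simp: info_level_def)
  also have "\<dots> \<le> (\<Sum>k\<le>2 * n. real k * info_prob n k - savings n k)"
    by (intro sum_mono sum_Pstr_code_length_le)
  finally show ?thesis .
qed

section \<open>The distribution of the information of X_1^n\<close>

lemma level_len_empty: "k \<le> n \<or> 2 * n < k \<Longrightarrow> level_len n k = {}"
  by (auto simp: info_level_def dest!: admissible_nonempty info_bounds)

lemma info_prob_eq_0: "k \<le> n \<or> 2 * n < k \<Longrightarrow> info_prob n k = 0"
  by (simp add: info_prob_def level_len_empty)

lemma info_prob_0: "info_prob 0 k = 0"
  by (rule info_prob_eq_0) auto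

lemma info_prob_1: "info_prob 1 k = of_bool (k = 2)"
proof (cases "k = 2")
  case False
  then have "k \<le> 1 \<or> 2 * 1 < k" by linarith
  then show ?thesis using False by (simp add: info_prob_eq_0)
qed (simp add: info_prob_def info_level_2)

lemma info_prob_rec:
  assumes "k \<ge> 3"
  shows "info_prob (Suc n) k = (info_prob n (k - 1) + info_prob n (k - 2)) / 2"
proof -
  obtain j where k: "k = j + 3"
    using assms by (metis add.commute le_Suc_ex)
  have "card (level_len (Suc n) k) = card (level_len n (j + 2)) + 2 * card (level_len n (j + 1))"
    using card_info_level_rec[of k "\<lambda>l. l = Suc n"] k by simp
  then show ?thesis
    unfolding info_prob_def k by (simp add: field_simps power_add)
qed

lemma info_prob_Suc:
  assumes "n \<ge> 1"
  shows "info_prob (Suc n) k = (info_prob n (k - 1) + info_prob n (k - 2)) / 2"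
proof (cases "k \<ge> 3")
  case False
  with assms have "k \<le> Suc n" "k - 1 \<le> n" "k - 2 \<le> n"
    by linarith+
  then show ?thesis
    by (simp add: info_prob_eq_0)
qed (rule info_prob_rec)

lemma info_prob_binomial:
  assumes "n \<ge> 1" and "n < k"
  shows "info_prob n k = real ((n - 1) choose (k - n - 1)) / 2 ^ (n - 1)"
  using assms
proof (induction n arbitrary: k rule: nat_induct_at_least)
  case base
  then show ?case using info_prob_1[of k] by (cases "k = 2") auto
next
  case (Suc n)
  obtain m where n: "n = Suc m" using Suc.hyps by (cases n) auto
  have "k = n + 2 \<or> (\<exists>j. k = n + 3 + j)"
    using Suc.prems by presburger
  then consider "k = n + 2" | j where "k = n + 3 + j"
    by blast
  then show ?case
  proof cases
    case 1
    then show ?thesis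
      using Suc.IH[of "n + 1"] info_prob_rec[of k n] info_prob_eq_0[of n n] n by simp
  next
    case 2
    have "info_prob (Suc n) k = (info_prob n (n + 2 + j) + info_prob n (n + 1 + j)) / 2"
      using info_prob_rec[of k n] 2 by simp
    also have "\<dots> = (real (m choose Suc j) + real (m choose j)) / 2 ^ n"
      using Suc.IH[of "n + 2 + j"] Suc.IH[of "n + 1 + j"] n by (simp add: field_simps)
    also have "\<dots> = real (n choose Suc j) / 2 ^ n"
      using n by simp
    finally show ?thesis using 2 by simp
  qed
qed

lemma card_level_shorter_Suc:
  "card (level_shorter (Suc n) k) = card (level_shorter n k) + card (level_len n k)"
proof -
  have "level_shorter (Suc n) k = level_shorter n k \<union> level_len n k"
    by (auto simp: info_level_def)
  moreover have "card (level_shorter n k \<union> level_len n k) = card (level_shorter n k) + card (level_len n k)"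
    by (rule card_Un_disjoint) (simp, simp, auto simp: info_level_def)
  ultimately show ?thesis by simp
qed

lemma spare_Suc: "spare (Suc n) k = spare n k - info_prob n k"
  by (simp add: spare_def info_prob_def card_level_shorter_Suc add_divide_distrib)

lemma spare_rec:
  assumes "k \<ge> 3"
  shows "spare (Suc n) k = (spare n (k - 1) + spare n (k - 2)) / 2"
proof -
  obtain j where k: "k = j + 3"
    using assms by (metis add.commute le_Suc_ex)
  have "card (level k) = card (level (j + 2)) + 2 * card (level (j + 1))"
    using card_level_rec[of k] k by simp
  moreover have "card (level_shorter (Suc n) k) =
      card (level_shorter n (j + 2)) + 2 * card (level_shorter n (j + 1))"
    using card_info_level_rec[of k "\<lambda>l. l < Suc n"] k by simp
  ultimately show ?thesis
    unfolding spare_def k by (simp add: field_simps power_add)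
qed

lemma spare_antimono: "n \<le> m \<Longrightarrow> spare m k \<le> spare n k"
proof (induction m rule: dec_induct)
  case (step m)
  moreover have "info_prob m k \<ge> 0"
    by (simp add: info_prob_def)
  ultimately show ?case
    using spare_Suc[of m k] by linarith
qed simp

lemma spare_0: "spare 0 k = card (level k) / 2 ^ Suc k"
  by (simp add: spare_def info_level_def)

lemma spare_2: "spare 2 k = card (level k) / 2 ^ Suc k - of_bool (k = 2)"
  using spare_Suc[of 1 k] spare_Suc[of 0 k] spare_0 info_prob_0[of k] info_prob_1[of k]
  by (simp add: numeral_2_eq_2)

definition central_prob :: "nat \<Rightarrow> real" where
  "central_prob t = real ((2 * t) choose t) / 4 ^ t"

lemma binomial_odd_middle: "(2 * t + 1) choose t = (2 * t + 1) choose Suc t"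
  by (subst binomial_symmetric) simp_all

lemma central_binomial_Suc: "2 * Suc t choose Suc t = 2 * ((2 * t + 1) choose Suc t)"
proof -
  have "2 * Suc t choose Suc t = ((2 * t + 1) choose t) + ((2 * t + 1) choose Suc t)"
    using binomial_Suc_Suc[of "2 * t + 1" t] by simp
  then show ?thesis
    using binomial_odd_middle[of t] by simp
qed

lemma Suc_times_central_binomial_Suc:
  "Suc t * (2 * Suc t choose Suc t) = 2 * (2 * t + 1) * (2 * t choose t)"
proof -
  have "Suc t * (2 * Suc t choose Suc t) = 2 * (Suc t * ((2 * t + 1) choose Suc t))"
    by (simp only: central_binomial_Suc mult.left_commute)
  also have "Suc t * ((2 * t + 1) choose Suc t) = (2 * t + 1) * (2 * t choose t)"
    using Suc_times_binomial[of t "2 * t"] by (simp del: binomial_Suc_Suc)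
  finally show ?thesis by simp
qed

lemma central_prob_Suc:
  "central_prob (Suc t) = central_prob t * (2 * real t + 1) / (2 * real t + 2)"
proof -
  define a where "a = real (2 * Suc t choose Suc t)"
  define b where "b = real (2 * t choose t)"
  have "real (Suc t * (2 * Suc t choose Suc t)) = real (2 * (2 * t + 1) * (2 * t choose t))"
    by (simp only: Suc_times_central_binomial_Suc)
  then have ab: "(real t + 1) * a = 2 * (2 * real t + 1) * b"
    unfolding a_def b_def by (simp add: algebra_simps del: binomial_Suc_Suc)
  have "central_prob (Suc t) = (real t + 1) * a / (4 * 4 ^ t * (real t + 1))"
    by (simp add: central_prob_def a_def)
  also have "\<dots> = 2 * (2 * real t + 1) * b / (4 * 4 ^ t * (real t + 1))"
    by (simp only: ab)
  also have "\<dots> = b / 4 ^ t * (2 * real t + 1) / (2 * real t + 2)"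
    by (simp add: divide_simps) (simp add: algebra_simps)
  also have "b / 4 ^ t = central_prob t"
    by (simp add: central_prob_def b_def)
  finally show ?thesis .
qed

lemma central_prob_pos: "central_prob t > 0"
  by (simp add: central_prob_def)

lemma central_prob_le_half: "t \<ge> 1 \<Longrightarrow> central_prob t \<le> 1/2"
proof (induction t rule: nat_induct_at_least)
  case base
  then show ?case by (simp add: central_prob_def)
next
  case (Suc t)
  have "central_prob (Suc t) \<le> central_prob t"
    using central_prob_pos[of t] by (simp add: central_prob_Suc field_simps)
  with Suc.IH show ?case by simp
qed

lemma info_prob_diag:
  assumes "t \<ge> 1"
  shows "info_prob (2 * t) (3 * t) = central_prob t" and "info_prob (2 * t) (3 * t + 1) = central_prob t"
proof -
  obtain s where t: "t = Suc s" using assms by (cases t) auto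
  have "central_prob t = real ((2 * s + 1) choose Suc s) / 2 ^ (2 * s + 1)"
    unfolding central_prob_def t central_binomial_Suc by (simp add: power_mult del: binomial_Suc_Suc)
  then show "info_prob (2 * t) (3 * t) = central_prob t" "info_prob (2 * t) (3 * t + 1) = central_prob t"
    using info_prob_binomial[of "2 * t" "3 * t"] info_prob_binomial[of "2 * t" "3 * t + 1"]
      binomial_odd_middle[of s] t by simp_all
qed

lemma info_prob_diag_odd: "t \<ge> 1 \<Longrightarrow> info_prob (2 * t + 1) (3 * t + 2) = central_prob t"
  using info_prob_rec[of "3 * t + 2" "2 * t"] info_prob_diag[of t] by simp

definition info_expect :: "nat \<Rightarrow> (nat \<Rightarrow> real) \<Rightarrow> real" where
  "info_expect n g = (\<Sum>k\<le>2 * n. g k * info_prob n k)"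

lemma info_expect_Suc:
  assumes "n \<ge> 1"
  shows "info_expect (Suc n) g = (info_expect n (\<lambda>k. g (k + 1)) + info_expect n (\<lambda>k. g (k + 2))) / 2"
proof -
  have zero: "info_prob n 0 = 0" "info_prob n (Suc (2 * n)) = 0"
    by (simp_all add: info_prob_eq_0)
  have "info_expect (Suc n) g =
      ((\<Sum>k\<le>Suc (Suc (2 * n)). g k * info_prob n (k - 1))
        + (\<Sum>k\<le>Suc (Suc (2 * n)). g k * info_prob n (k - 2))) / 2"
    by (simp add: info_expect_def info_prob_Suc[OF assms] sum_divide_distrib sum.distrib
        distrib_left add_divide_distrib)
  also have "(\<Sum>k\<le>Suc (Suc (2 * n)). g k * info_prob n (k - 1)) = info_expect n (\<lambda>k. g (k + 1))"
    by (subst sum.atMost_Suc_shift) (simp add: info_expect_def zero)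
  also have "(\<Sum>k\<le>Suc (Suc (2 * n)). g k * info_prob n (k - 2)) = info_expect n (\<lambda>k. g (k + 2))"
    by (simp only: sum.atMost_Suc_shift) (simp add: info_expect_def zero numeral_2_eq_2)
  finally show ?thesis .
qed

lemma info_expect_1: "n \<ge> 1 \<Longrightarrow> info_expect n (\<lambda>_. 1) = 1"
proof (induction n rule: nat_induct_at_least)
  case base
  then show ?case by (simp add: info_expect_def info_prob_1[unfolded One_nat_def] numeral_2_eq_2)
next
  case (Suc n)
  then show ?case by (simp add: info_expect_Suc)
qed

lemma info_expect_add_const: "n \<ge> 1 \<Longrightarrow> info_expect n (\<lambda>k. c + g k) = c + info_expect n g"
  using info_expect_1[of n]
  by (simp add: info_expect_def distrib_right sum.distrib flip: sum_distrib_left)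

lemma info_expect_mean: "n \<ge> 1 \<Longrightarrow> info_expect n real = 3/2 * n + 1/2"
proof (induction n rule: nat_induct_at_least)
  case base
  then show ?case by (simp add: info_expect_def info_prob_1[unfolded One_nat_def] numeral_2_eq_2)
next
  case (Suc n)
  have "info_expect n (\<lambda>k. real (k + 1)) = 1 + info_expect n real"
    and "info_expect n (\<lambda>k. real (k + 2)) = 2 + info_expect n real"
    using info_expect_add_const[of n _ real] Suc.hyps by simp_all
  with Suc show ?case
    by (simp add: info_expect_Suc)
qed

definition info_tail :: "nat \<Rightarrow> nat \<Rightarrow> real" where
  "info_tail n j = (\<Sum>k = j..2 * n. info_prob n k)"

lemma info_tail_eq_expect: "info_tail n j = info_expect n (\<lambda>k. of_bool (j \<le> k))"
proof -
  have "info_expect n (\<lambda>k. of_bool (j \<le> k)) = (\<Sum>k\<le>2 * n. if j \<le> k then info_prob n k else 0)"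
    unfolding info_expect_def by (rule sum.cong) auto
  also have "\<dots> = (\<Sum>k\<in>{k\<in>{..2 * n}. j \<le> k}. info_prob n k)"
    by (rule sum.inter_filter[symmetric]) simp
  also have "{k\<in>{..2 * n}. j \<le> k} = {j..2 * n}"
    by auto
  finally show ?thesis
    by (simp add: info_tail_def)
qed

lemma info_tail_Suc:
  assumes "n \<ge> 1" and "j \<ge> 2"
  shows "info_tail (Suc n) j = (info_tail n (j - 1) + info_tail n (j - 2)) / 2"
proof -
  have "(\<lambda>k. of_bool (j \<le> k + 1) :: real) = (\<lambda>k. of_bool (j - 1 \<le> k))"
    and "(\<lambda>k. of_bool (j \<le> k + 2) :: real) = (\<lambda>k. of_bool (j - 2 \<le> k))"
    using assms(2) by (auto intro!: ext)
  then show ?thesis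
    unfolding info_tail_eq_expect info_expect_Suc[OF assms(1)] by simp
qed

lemma info_tail_split: "info_tail n j = info_prob n j + info_tail n (Suc j)"
proof (cases "j \<le> 2 * n")
  case True
  then show ?thesis by (simp add: info_tail_def sum.atLeast_Suc_atMost)
next
  case False
  then show ?thesis by (simp add: info_tail_def info_prob_eq_0)
qed

lemma info_tail_diag:
  assumes "t \<ge> 1"
  shows "info_tail (2 * t) (3 * t + 2) = 1/2 - central_prob t
    \<and> info_tail (2 * t + 1) (3 * t + 3) = 1/2 - central_prob t / 2"
  using assms
proof (induction t rule: nat_induct_at_least)
  case base
  have "info_tail 2 5 = 0"
    by (simp add: info_tail_def)
  moreover have "info_tail 3 6 = (info_tail 2 5 + info_tail 2 4) / 2"
    using info_tail_Suc[of 2 6] by (simp add: numeral_3_eq_3)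
  moreover have "info_tail 2 4 = central_prob 1"
    using info_tail_split[of 2 4] info_prob_diag(2)[of 1] by (simp add: info_tail_def)
  moreover have "central_prob 1 = 1/2"
    by (simp add: central_prob_def)
  ultimately show ?case by simp
next
  case (Suc t)
  let ?c = "central_prob t" and ?c' = "central_prob (Suc t)" and ?q = "info_prob (2 * t + 1) (3 * t + 3)"
  have c': "?c' = (?q + ?c) / 2"
    using info_prob_rec[of "3 * t + 4" "2 * t + 1"] info_prob_diag(2)[of "Suc t"]
      info_prob_diag_odd[OF Suc.hyps] by (simp add: algebra_simps)
  have U': "info_tail (2 * Suc t) (3 * Suc t + 2) = 1/2 - ?c'"
    using info_tail_Suc[of "2 * t + 1" "3 * t + 5"] info_tail_split[of "2 * t + 1" "3 * t + 3"]
      Suc.IH c' by (simp add: algebra_simps)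
  have "info_tail (2 * Suc t + 1) (3 * Suc t + 3) = 1/2 - ?c' / 2"
    using info_tail_Suc[of "2 * Suc t" "3 * Suc t + 3"] info_tail_split[of "2 * Suc t" "3 * Suc t + 1"]
      info_prob_diag(2)[of "Suc t"] U' by (simp add: algebra_simps)
  with U' show ?case ..
qed

section \<open>Spare capacity near the diagonal\<close>

definition spare_diag :: "nat \<Rightarrow> real" where
  "spare_diag t = spare (2 * t) (3 * t)"

lemma spare_diag_step:
  assumes t: "t \<ge> 1" and Y: "spare (2 * t) (3 * t + 1) = central_prob t - spare_diag t / 2"
  shows "spare_diag (Suc t) = central_prob t / 4 - spare_diag t / 8"
    and "spare (2 * Suc t) (3 * Suc t + 1) = central_prob (Suc t) - spare_diag (Suc t) / 2"
proof -
  let ?c = "central_prob t" and ?X = "spare_diag t" and ?q = "info_prob (2 * t + 1) (3 * t + 3)"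
  have W: "spare (2 * t + 1) (3 * t + 2) = (spare (2 * t) (3 * t + 1) + ?X) / 2"
    using spare_rec[of "3 * t + 2" "2 * t"] t by (simp add: spare_diag_def)
  have D: "spare (2 * t + 1) (3 * t + 1) = spare (2 * t) (3 * t + 1) - ?c"
    using spare_Suc[of "2 * t" "3 * t + 1"] info_prob_diag(2)[OF t] by simp
  have X': "spare_diag (Suc t) = (spare (2 * t + 1) (3 * t + 2) + spare (2 * t + 1) (3 * t + 1)) / 2"
    using spare_rec[of "3 * t + 3" "2 * t + 1"] by (simp add: spare_diag_def algebra_simps)
  then show X'_eq: "spare_diag (Suc t) = ?c / 4 - ?X / 8"
    using W D Y by simp
  have "spare_diag (Suc t) = spare (2 * t + 1) (3 * t + 3) - ?q"
    using spare_Suc[of "2 * t + 1" "3 * t + 3"] by (simp add: spare_diag_def algebra_simps)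
  moreover have "central_prob (Suc t) = (?q + ?c) / 2"
    using info_prob_rec[of "3 * t + 4" "2 * t + 1"] info_prob_diag(2)[of "Suc t"]
      info_prob_diag_odd[OF t] by (simp add: algebra_simps)
  moreover have "spare (2 * Suc t) (3 * Suc t + 1) =
      (spare (2 * t + 1) (3 * t + 3) + spare (2 * t + 1) (3 * t + 2)) / 2"
    using spare_rec[of "3 * t + 4" "2 * t + 1"] by (simp add: algebra_simps)
  ultimately show "spare (2 * Suc t) (3 * Suc t + 1) = central_prob (Suc t) - spare_diag (Suc t) / 2"
    using W Y X'_eq by argo
qed

lemma spare_above_diag: "t \<ge> 1 \<Longrightarrow> spare (2 * t) (3 * t + 1) = central_prob t - spare_diag t / 2"
proof (induction t rule: nat_induct_at_least)
  case base
  show ?case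
    using spare_2[of 3] spare_2[of 4] card_level_3 card_level_4
    by (simp add: spare_diag_def central_prob_def)
next
  case (Suc t)
  then show ?case by (rule spare_diag_step(2))
qed

lemma spare_diag_Suc: "t \<ge> 1 \<Longrightarrow> spare_diag (Suc t) = central_prob t / 4 - spare_diag t / 8"
  by (rule spare_diag_step(1)[OF _ spare_above_diag])

lemma spare_odd_diag: "t \<ge> 1 \<Longrightarrow> spare (2 * t + 1) (3 * t + 2) = central_prob t / 2 + spare_diag t / 4"
  using spare_rec[of "3 * t + 2" "2 * t"] spare_above_diag[of t] by (simp add: spare_diag_def)

lemma spare_diag_1: "spare_diag 1 = 1/4"
  using spare_2[of 3] card_level_3 by (simp add: spare_diag_def)

lemma spare_diag_bounds: "t \<ge> 1 \<Longrightarrow> 0 \<le> spare_diag t \<and> spare_diag t \<le> central_prob t"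
proof (induction t rule: nat_induct_at_least)
  case base
  then show ?case using spare_diag_1 by (simp add: central_prob_def One_nat_def)
next
  case (Suc t)
  have "central_prob t / 4 \<le> central_prob (Suc t)"
    using central_prob_pos[of t] by (simp add: central_prob_Suc field_simps)
  with Suc show ?case
    by (simp add: spare_diag_Suc)
qed

lemma spare_nonneg:
  assumes "3 * n \<le> 2 * k"
  shows "0 \<le> spare n k"
proof (cases "k \<ge> 3")
  case False
  then have "spare 1 k \<le> spare n k"
    using assms by (intro spare_antimono) linarith
  moreover have "0 \<le> spare 1 k"
    using spare_Suc[of 0 k] by (simp add: spare_0 info_prob_0)
  ultimately show ?thesis
    by linarith
next
  case True
  define s where "s = k div 3"
  have s: "s \<ge> 1"
    using True by (simp add: s_def)
  have X: "0 \<le> spare_diag s" and "spare_diag s \<le> central_prob s"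
    using spare_diag_bounds[OF s] by auto
  then have Y: "0 \<le> spare (2 * s) (3 * s + 1)"
    using spare_above_diag[OF s] by simp
  have W: "0 \<le> spare (2 * s + 1) (3 * s + 2)"
    using spare_odd_diag[OF s] X central_prob_pos[of s] by simp
  consider "k = 3 * s" | "k = 3 * s + 1" | "k = 3 * s + 2"
    unfolding s_def by linarith
  then show ?thesis
  proof cases
    case 1
    then show ?thesis
      using spare_antimono[of n "2 * s" k] X assms by (simp add: spare_diag_def)
  next
    case 2
    then show ?thesis
      using spare_antimono[of n "2 * s" k] Y assms by simp
  next
    case 3
    then show ?thesis
      using spare_antimono[of n "2 * s + 1" k] W assms by simp
  qed
qed

lemma savings_nonneg: "0 \<le> savings n k"
  by (simp add: savings_def)

(* If spare (Suc n) k >= 0, the whole class of length n and information k fits into the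
   spare words. *)
lemma savings_eq_info_prob: "0 \<le> spare (Suc n) k \<Longrightarrow> savings n k = info_prob n k"
  using spare_Suc[of n k] by (simp add: savings_def info_prob_def)

lemma sum_savings_ge:
  assumes "k1 \<le> k0" and "k0 \<le> 2 * n + 1" and "3 * Suc n \<le> 2 * k0"
  shows "(\<Sum>k = k1..<k0. min (info_prob n k) (spare n k)) + info_tail n k0 \<le> (\<Sum>k\<le>2 * n. savings n k)"
proof -
  have "(\<Sum>k = k1..<k0. min (info_prob n k) (spare n k)) \<le> (\<Sum>k = k1..<k0. savings n k)"
    by (rule sum_mono) (simp add: savings_def)
  moreover have "info_tail n k0 = (\<Sum>k = k0..<2 * n + 1. savings n k)"
    unfolding info_tail_def atLeastLessThanSuc_atLeastAtMost[symmetric] Suc_eq_plus1[symmetric]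
    using assms(3) by (intro sum.cong refl savings_eq_info_prob[symmetric] spare_nonneg) auto
  moreover have "(\<Sum>k = k1..<k0. savings n k) + (\<Sum>k = k0..<2 * n + 1. savings n k) =
      (\<Sum>k = k1..<2 * n + 1. savings n k)"
    using assms by (intro sum.atLeastLessThan_concat) auto
  moreover have "(\<Sum>k = k1..<2 * n + 1. savings n k) \<le> (\<Sum>k\<le>2 * n. savings n k)"
    by (rule sum_mono2) (auto simp: savings_nonneg)
  ultimately show ?thesis
    by linarith
qed

lemma EL_le_mean_sub_savings: "n \<ge> 1 \<Longrightarrow> EL n \<le> 3/2 * n + 1/2 - (\<Sum>k\<le>2 * n. savings n k)"
  using EL_le_sum_savings[of n] info_expect_mean[of n] by (simp add: info_expect_def sum_subtractf)

lemma gap_even: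
  assumes t: "t \<ge> 1"
  shows "spare_diag t / 2 \<le> 3/2 * (2 * real t) - EL (2 * t)"
proof -
  let ?c = "central_prob t" and ?X = "spare_diag t"
  have X: "0 \<le> ?X" "?X \<le> ?c"
    using spare_diag_bounds[OF t] by auto
  have "{3 * t..<3 * t + 2} = {3 * t, 3 * t + 1}"
    by auto
  then have "(\<Sum>k = 3 * t..<3 * t + 2. min (info_prob (2 * t) k) (spare (2 * t) k)) = ?X + (?c - ?X / 2)"
    using X info_prob_diag[OF t] spare_above_diag[OF t] by (simp add: spare_diag_def)
  then have "1/2 + ?X / 2 \<le> (\<Sum>k\<le>2 * (2 * t). savings (2 * t) k)"
    using sum_savings_ge[of "3 * t" "3 * t + 2" "2 * t"] info_tail_diag[OF t] t by simp
  then show ?thesis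
    using EL_le_mean_sub_savings[of "2 * t"] t by simp
qed

lemma gap_odd:
  assumes t: "t \<ge> 1"
  shows "spare_diag t / 4 \<le> 3/2 * (2 * real t + 1) - EL (2 * t + 1)"
proof -
  let ?c = "central_prob t" and ?X = "spare_diag t"
  have X: "0 \<le> ?X" "?X \<le> ?c"
    using spare_diag_bounds[OF t] by auto
  have "{3 * t + 2..<3 * t + 3} = {3 * t + 2}"
    by auto
  then have "(\<Sum>k = 3 * t + 2..<3 * t + 3. min (info_prob (2 * t + 1) k) (spare (2 * t + 1) k)) = ?c / 2 + ?X / 4"
    using X info_prob_diag_odd[OF t] spare_odd_diag[OF t] by simp
  then have "1/2 + ?X / 4 \<le> (\<Sum>k\<le>2 * (2 * t + 1). savings (2 * t + 1) k)"
    using sum_savings_ge[of "3 * t + 2" "3 * t + 3" "2 * t + 1"] info_tail_diag[OF t] by simp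
  then show ?thesis
    using EL_le_mean_sub_savings[of "2 * t + 1", OF le_add2] by simp argo
qed

section \<open>Asymptotics of the savings\<close>

lemma spare_diag_approx: "t \<ge> 1 \<Longrightarrow> \<bar>spare_diag t - 2/9 * central_prob t\<bar> \<le> 1 / (6 * real t)"
proof (induction t rule: nat_induct_at_least)
  case base
  then show ?case
    using spare_diag_1 by (simp add: central_prob_def One_nat_def)
next
  case (Suc t)
  let ?c = "central_prob t" and ?e = "spare_diag t - 2/9 * central_prob t"
  have t: "real t \<ge> 1"
    using Suc.hyps by simp
  have c: "0 < ?c" "?c \<le> 1/2"
    using central_prob_pos central_prob_le_half[OF Suc.hyps] by auto
  have "spare_diag (Suc t) - 2/9 * central_prob (Suc t) = - ?e / 8 + ?c / (9 * real (Suc t))"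
    using t by (simp add: spare_diag_Suc[OF Suc.hyps] central_prob_Suc field_simps)
  also have "\<bar>- ?e / 8 + ?c / (9 * real (Suc t))\<bar> \<le> \<bar>?e\<bar> / 8 + ?c / (9 * real (Suc t))"
    using abs_triangle_ineq[of "- ?e / 8" "?c / (9 * real (Suc t))"] c t by (simp add: abs_minus_commute)
  also have "\<dots> \<le> 1 / (48 * real t) + (1/2) / (9 * real (Suc t))"
    using Suc.IH c t by (intro add_mono divide_right_mono) auto
  also have "\<dots> \<le> 1 / (9 * real (Suc t)) + (1/2) / (9 * real (Suc t))"
    using t by (intro add_right_mono divide_left_mono) auto
  also have "\<dots> = 1 / (6 * real (Suc t))"
    by (simp add: field_simps del: of_nat_Suc)
  finally show ?case .
qed

lemma central_prob_wallis:
  "central_prob t ^ 2 * (2 * real t + 1) * (\<Prod>k=1..t. 4 * real k ^ 2 / (4 * real k ^ 2 - 1)) = 1"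
proof (induction t)
  case 0
  then show ?case by (simp add: central_prob_def)
next
  case (Suc t)
  have step: "(x * (2 * s + 1) / (2 * s + 2))\<^sup>2 * (2 * s + 3) * (4 * (s + 1)\<^sup>2 / (4 * (s + 1)\<^sup>2 - 1))
      = x\<^sup>2 * (2 * s + 1)" if "0 \<le> s" for x s :: real
  proof -
    have "4 * (s + 1)\<^sup>2 - 1 = (2 * s + 1) * (2 * s + 3)" "4 * (s + 1)\<^sup>2 = (2 * s + 2)\<^sup>2"
      by (simp_all add: power2_eq_square algebra_simps)
    moreover have "2 * s + 1 \<noteq> 0" "2 * s + 2 \<noteq> 0" "2 * s + 3 \<noteq> 0"
      using that by linarith+
    ultimately show ?thesis
      by (simp add: power_mult_distrib power_divide) (simp add: power2_eq_square)
  qed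
  define s where "s = real t"
  define P where "P = (\<Prod>k=1..t. 4 * real k ^ 2 / (4 * real k ^ 2 - 1))"
  define F where "F = 4 * (s + 1)\<^sup>2 / (4 * (s + 1)\<^sup>2 - 1)"
  have "(\<Prod>k=1..Suc t. 4 * real k ^ 2 / (4 * real k ^ 2 - 1)) = F * P"
    by (simp add: prod.nat_ivl_Suc' F_def P_def s_def add.commute)
  moreover have "2 * real (Suc t) + 1 = 2 * s + 3"
    by (simp add: s_def)
  ultimately have "central_prob (Suc t) ^ 2 * (2 * real (Suc t) + 1) *
      (\<Prod>k=1..Suc t. 4 * real k ^ 2 / (4 * real k ^ 2 - 1)) =
      ((central_prob t * (2 * s + 1) / (2 * s + 2))\<^sup>2 * (2 * s + 3) * F) * P"
    by (simp only: central_prob_Suc s_def mult.assoc)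
  also have "\<dots> = central_prob t ^ 2 * (2 * real t + 1) * P"
    unfolding F_def using step[of s] by (simp add: s_def)
  also have "\<dots> = 1"
    using Suc.IH by (simp only: P_def)
  finally show ?case .
qed

lemma central_prob_sqrt_tendsto: "(\<lambda>t. central_prob t * sqrt (real t)) \<longlonglongrightarrow> 1 / sqrt pi"
proof -
  let ?W = "\<lambda>t. \<Prod>k=1..t. 4 * real k ^ 2 / (4 * real k ^ 2 - 1)"
  have "(\<lambda>t. inverse (?W t)) \<longlonglongrightarrow> inverse (pi / 2)"
    by (rule tendsto_inverse[OF wallis]) simp
  moreover have "inverse (?W t) = central_prob t ^ 2 * (2 * real t + 1)" for t
    using central_prob_wallis[of t] by (simp add: inverse_unique mult.commute)
  ultimately have "(\<lambda>t. central_prob t ^ 2 * (2 * real t + 1)) \<longlonglongrightarrow> 2 / pi"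
    by simp
  moreover have "(\<lambda>t. real t / (2 * real t + 1)) \<longlonglongrightarrow> 1 / 2"
  proof -
    have "(\<lambda>t. 1 / (2 + inverse (real t))) \<longlonglongrightarrow> 1 / (2 + 0)"
      by (intro tendsto_intros lim_inverse_n) simp
    moreover have "\<forall>\<^sub>F t in sequentially. 1 / (2 + inverse (real t)) = real t / (2 * real t + 1)"
      using eventually_ge_at_top[of 1] by eventually_elim (simp add: field_simps)
    ultimately show ?thesis
      by (simp add: tendsto_cong)
  qed
  ultimately have "(\<lambda>t. sqrt (central_prob t ^ 2 * (2 * real t + 1) * (real t / (2 * real t + 1))))
      \<longlonglongrightarrow> sqrt (2 / pi * (1 / 2))"
    by (intro tendsto_real_sqrt tendsto_mult)
  moreover have "sqrt (central_prob t ^ 2 * (2 * real t + 1) * (real t / (2 * real t + 1)))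
      = central_prob t * sqrt (real t)" for t
    using central_prob_pos[of t] by (simp add: real_sqrt_mult)
  ultimately show ?thesis
    by (simp add: real_sqrt_divide)
qed

lemma sqrt_mult_central_prob_tendsto:
  "(\<lambda>t. sqrt (real t) * (central_prob t / a - 1 / (b * real t))) \<longlonglongrightarrow> 1 / (a * sqrt pi)"
proof -
  have "(\<lambda>t. inverse (sqrt (real t))) \<longlonglongrightarrow> 0"
    using tendsto_real_sqrt[OF lim_inverse_n] by (simp add: real_sqrt_inverse)
  then have "(\<lambda>t. central_prob t * sqrt (real t) * inverse a - inverse (sqrt (real t)) * inverse b)
      \<longlonglongrightarrow> 1 / sqrt pi * inverse a - 0 * inverse b"
    by (intro tendsto_intros central_prob_sqrt_tendsto)
  moreover have "sqrt (real t) * (central_prob t / a - 1 / (b * real t)) =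
      central_prob t * sqrt (real t) * inverse a - sqrt (real t) / real t * inverse b" for t
    by (simp add: field_simps)
  ultimately show ?thesis
    by (simp add: sqrt_divide_self_eq field_simps)
qed

lemma lower_bound_powr_half:
  fixes f h :: "nat \<Rightarrow> real"
  assumes "(\<lambda>t. sqrt (real t) * h t) \<longlonglongrightarrow> L"
    and "\<forall>\<^sub>F t in sequentially. h t \<le> f t"
  shows "\<exists>g. (g \<longlongrightarrow> 0) at_top \<and>
    (\<forall>\<^sub>F t in at_top. f t \<ge> (L + g t) * real t powr (-1/2))"
proof (intro exI conjI)
  let ?g = "\<lambda>t. sqrt (real t) * h t - L"
  show "(?g \<longlongrightarrow> 0) at_top"
    using tendsto_diff[OF assms(1) tendsto_const[of L]] by simp
  have h: "(L + ?g t) * real t powr (-1/2) = h t" if "t \<ge> 1" for t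
    using that by (simp add: powr_minus powr_half_sqrt field_simps)
  show "\<forall>\<^sub>F t in at_top. f t \<ge> (L + ?g t) * real t powr (-1/2)"
    using assms(2) eventually_ge_at_top[of 1] by eventually_elim (metis h)
qed

lemma spare_diag_ge: "t \<ge> 1 \<Longrightarrow> central_prob t / 18 - 1 / (24 * real t) \<le> spare_diag t / 4"
  using spare_diag_approx[of t] by (simp add: abs_le_iff)

lemma gap_odd_central:
  "t \<ge> 1 \<Longrightarrow> central_prob t / 18 - 1 / (24 * real t) \<le> 3/2 * (2 * real t + 1) - EL (2 * t + 1)"
  using spare_diag_ge[of t] gap_odd[of t] by linarith

lemma gap_even_central:
  "t \<ge> 1 \<Longrightarrow> central_prob t / 9 - 1 / (12 * real t) \<le> 3/2 * (2 * real t) - EL (2 * t)"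
  using spare_diag_ge[of t] gap_even[of t] by simp

lemma gap_central:
  assumes "t \<ge> 1" and "n = 2 * t \<or> n = 2 * t + 1"
  shows "central_prob t / 18 - 1 / (24 * real t) \<le> 3/2 * real n - EL n"
  using assms(2)
proof
  assume "n = 2 * t"
  then show ?thesis
    using spare_diag_ge[OF assms(1)] gap_even[OF assms(1)] spare_diag_bounds[OF assms(1)] by simp
next
  assume "n = 2 * t + 1"
  then show ?thesis
    using gap_odd_central[OF assms(1)] by (simp add: algebra_simps)
qed

lemma EL_le_eventually:
  assumes "0 < c" and "c < sqrt 2 / (18 * sqrt pi)"
  shows "\<exists>n0. \<forall>n\<ge>n0. EL n \<le> 3/2 * real n - c / sqrt (real n)"
proof -
  let ?h = "\<lambda>t. central_prob t / 18 - 1 / (24 * real t)"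
  have "(\<lambda>t. sqrt 2 * (sqrt (real t) * ?h t)) \<longlonglongrightarrow> sqrt 2 * (1 / (18 * sqrt pi))"
    by (intro tendsto_mult tendsto_const sqrt_mult_central_prob_tendsto)
  then have "\<forall>\<^sub>F t in sequentially. c < sqrt 2 * (sqrt (real t) * ?h t)"
    using assms(2) by (intro order_tendstoD(1)) auto
  then obtain T where T: "\<And>t. t \<ge> T \<Longrightarrow> c < sqrt 2 * (sqrt (real t) * ?h t)"
    unfolding eventually_sequentially by blast
  have "EL n \<le> 3/2 * real n - c / sqrt (real n)" if n: "n \<ge> 2 * T + 2" for n
  proof -
    define t where "t = n div 2"
    have t: "t \<ge> 1" "t \<ge> T" and n_cases: "n = 2 * t \<or> n = 2 * t + 1"
      using n by (auto simp: t_def)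
    have "c < sqrt (real (2 * t)) * ?h t"
      using T[OF t(2)] by (simp add: real_sqrt_mult)
    moreover have "sqrt (real (2 * t)) \<le> sqrt (real n)"
      using n_cases by auto
    moreover have "0 < ?h t"
    proof -
      have "0 < sqrt (real (2 * t)) * ?h t"
        using assms(1) calculation(1) by linarith
      then show ?thesis
        by (simp add: zero_less_mult_iff)
    qed
    ultimately have "c < sqrt (real n) * ?h t"
      by (meson mult_right_mono less_le_trans less_imp_le)
    then have "c / sqrt (real n) < ?h t"
      using n by (simp add: divide_less_eq mult.commute)
    then show ?thesis
      using gap_central[OF t(1) n_cases] by simp
  qed
  then show ?thesis by blast
qed

theorem mainTheorem14:
  shows "(\<exists>g :: nat \<Rightarrow> real. (g \<longlongrightarrow> 0) at_top \<and>
           (\<forall>\<^sub>F t in at_top. 3/2 * (2 * real t + 1) - EL (2 * t + 1)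
              \<ge> (1 / (18 * sqrt pi) + g t) * real t powr (-1/2)))
       \<and> (\<exists>g :: nat \<Rightarrow> real. (g \<longlongrightarrow> 0) at_top \<and>
           (\<forall>\<^sub>F t in at_top. 3/2 * (2 * real t) - EL (2 * t)
              \<ge> (1 / (9 * sqrt pi) + g t) * real t powr (-1/2)))
       \<and> (\<forall>c::real. 0 < c \<and> c < sqrt 2 / (18 * sqrt pi) \<longrightarrow>
           (\<exists>n0::nat. \<forall>n\<ge>n0. EL n \<le> 3/2 * real n - c / sqrt (real n)))"
proof (intro conjI allI impI)
  show "\<exists>g :: nat \<Rightarrow> real. (g \<longlongrightarrow> 0) at_top \<and>
      (\<forall>\<^sub>F t in at_top. 3/2 * (2 * real t + 1) - EL (2 * t + 1)
        \<ge> (1 / (18 * sqrt pi) + g t) * real t powr (-1/2))"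
    by (rule lower_bound_powr_half[OF sqrt_mult_central_prob_tendsto[of 18 24]
          eventually_mono[OF eventually_ge_at_top[of 1] gap_odd_central]])
  show "\<exists>g :: nat \<Rightarrow> real. (g \<longlongrightarrow> 0) at_top \<and>
      (\<forall>\<^sub>F t in at_top. 3/2 * (2 * real t) - EL (2 * t)
        \<ge> (1 / (9 * sqrt pi) + g t) * real t powr (-1/2))"
    by (rule lower_bound_powr_half[OF sqrt_mult_central_prob_tendsto[of 9 12]
          eventually_mono[OF eventually_ge_at_top[of 1] gap_even_central]])
  fix c :: real
  assume "0 < c \<and> c < sqrt 2 / (18 * sqrt pi)"
  then show "\<exists>n0::nat. \<forall>n\<ge>n0. EL n \<le> 3/2 * real n - c / sqrt (real n)"
    by (intro EL_le_eventually) auto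
qed

end
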